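(* Let $G$ be a strongly regular graph with parameters $(n,d,\lambda,\mu)$ and let $t=\sqrt{(\mu-\lambda)^2+4(d-\mu)}$. Then $\chi_v(G)=1+\frac{2d}{t+\mu-\lambda}=\chi_{sv}(G)$ and $\chi_v(\overline{G})=\frac{n(t+\mu-\lambda)}{2d+t+\mu-\lambda}=\chi_{sv}(\overline{G})$. Consequently $\chi_v(\overline{G})=\frac{n}{\chi_v(G)}$ and $\chi_{sv}(\overline{G})=\frac{n}{\chi_{sv}(G)}$.
   Context: A strongly regular graph with parameters $(n,d,\lambda,\mu)$ is a $d$-regular graph on $n$ vertices, neither complete nor edgeless, in which adjacent vertices have exactly $\lambda$ common neighbours and distinct nonadjacent vertices exactly $\mu$ common neighbours; $\overline{G}$ is the complement. For a graph on $n$ vertices with at least one edge, a vector $t$-coloring ($t\ge2$) assigns unit vectors $u_i\in\mathbb R^n$ to vertices with $u_i^{\mathrm T}u_j\le-\frac1{t-1}$ for every edge $\{i,j\}$, and a strict vector $t$-coloring requires equality on every edge; $\chi_v$ and $\chi_{sv}$ are the smallest $t\ge2$ admitting a vector, resp. strict vector, $t$-coloring (both equal $1$ for edgeless graphs). *)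

theory Defs
  imports "HOL-Analysis.Analysis"
begin

text \<open>Simple graphs on the finite vertex type 'a, given by an adjacency relation.
  The number of vertices is n = CARD('a); vectors live in real^'a, i.e. R^n.\<close>

definition simple_graph :: "('a \<Rightarrow> 'a \<Rightarrow> bool) \<Rightarrow> bool" where
  "simple_graph E \<longleftrightarrow> (\<forall>i j. E i j \<longrightarrow> E j i) \<and> (\<forall>i. \<not> E i i)"

definition complement :: "('a \<Rightarrow> 'a \<Rightarrow> bool) \<Rightarrow> 'a \<Rightarrow> 'a \<Rightarrow> bool" where
  "complement E = (\<lambda>i j. i \<noteq> j \<and> \<not> E i j)"

definition strongly_regular ::
  "('a::finite \<Rightarrow> 'a \<Rightarrow> bool) \<Rightarrow> nat \<Rightarrow> nat \<Rightarrow> nat \<Rightarrow> nat \<Rightarrow> bool" where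
  "strongly_regular E n d lam mu \<longleftrightarrow>
     simple_graph E \<and> CARD('a) = n \<and>
     (\<forall>i. card {j. E i j} = d) \<and>
     (\<exists>i j. E i j) \<and> (\<exists>i j. i \<noteq> j \<and> \<not> E i j) \<and>
     (\<forall>i j. E i j \<longrightarrow> card {k. E i k \<and> E j k} = lam) \<and>
     (\<forall>i j. i \<noteq> j \<and> \<not> E i j \<longrightarrow> card {k. E i k \<and> E j k} = mu)"

definition vector_coloring :: "('a::finite \<Rightarrow> 'a \<Rightarrow> bool) \<Rightarrow> real \<Rightarrow> bool" where
  "vector_coloring E t \<longleftrightarrow> t \<ge> 2 \<and>
     (\<exists>u :: 'a \<Rightarrow> real^'a. (\<forall>i. norm (u i) = 1) \<and>
        (\<forall>i j. E i j \<longrightarrow> u i \<bullet> u j \<le> - 1 / (t - 1)))"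

definition strict_vector_coloring :: "('a::finite \<Rightarrow> 'a \<Rightarrow> bool) \<Rightarrow> real \<Rightarrow> bool" where
  "strict_vector_coloring E t \<longleftrightarrow> t \<ge> 2 \<and>
     (\<exists>u :: 'a \<Rightarrow> real^'a. (\<forall>i. norm (u i) = 1) \<and>
        (\<forall>i j. E i j \<longrightarrow> u i \<bullet> u j = - 1 / (t - 1)))"

text \<open>The "smallest" t is rendered as the infimum (the infimum is attained by compactness).\<close>

definition chi_v :: "('a::finite \<Rightarrow> 'a \<Rightarrow> bool) \<Rightarrow> real" where
  "chi_v E = (if \<not> (\<exists>i j. E i j) then 1 else Inf {t. vector_coloring E t})"

definition chi_sv :: "('a::finite \<Rightarrow> 'a \<Rightarrow> bool) \<Rightarrow> real" where
  "chi_sv E = (if \<not> (\<exists>i j. E i j) then 1 else Inf {t. strict_vector_coloring E t})"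

end

theory Submission
  imports Defs
begin

(*
  The adjacency matrix A of a strongly regular graph satisfies
  A^2 = (lam - mu) A + (d - mu) I + mu J, so on the complement of the all-ones vector its
  eigenvalues are the roots theta >= 0 > tau of x^2 - (lam - mu) x - (d - mu); in particular
  tau = (lam - mu - t) / 2.  An explicit sum-of-squares identity gives x^T A x >= tau |x|^2;
  summed over the coordinates of a vector colouring u this yields
  tau n <= sum_ij A_ij <u_i, u_j> <= -d n / (s - 1), i.e. s >= 1 - d / tau.  The normalised
  projections of the standard basis onto the tau-eigenspace form a strict colouring attaining
  this bound.  The complement is again of this kind, with smallest eigenvalue -1 - theta, and
  theta tau = mu - d together with n mu = (d - theta)(d - tau) turns its value
  1 + (n - 1 - d) / (1 + theta) into n / (1 - d / tau).
*)

definition adj :: "('a \<Rightarrow> 'a \<Rightarrow> bool) \<Rightarrow> 'a \<Rightarrow> 'a \<Rightarrow> real" where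
  "adj E i j = (if E i j then 1 else 0)"

definition delta :: "'a \<Rightarrow> 'a \<Rightarrow> real" where
  "delta i j = (if i = j then 1 else 0)"

lemma delta_commute: "delta i j = delta j i"
  by (simp add: delta_def)

lemma delta_same [simp]: "delta i i = 1"
  by (simp add: delta_def)

lemma delta_other [simp]: "i \<noteq> j \<Longrightarrow> delta i j = 0"
  by (simp add: delta_def)

lemma sum_mult_delta_right [simp]: "(\<Sum>j\<in>UNIV. f j * delta j (i::'a::finite)) = f i"
  by (simp add: delta_def if_distrib[of "(*) _"] cong: if_cong)

lemma sum_mult_delta_left [simp]: "(\<Sum>j\<in>UNIV. delta j (i::'a::finite) * f j) = f i"
  using sum_mult_delta_right[of f i] by (simp add: mult.commute)

lemma sum_mult_delta_right' [simp]: "(\<Sum>j\<in>UNIV. f j * delta (i::'a::finite) j) = f i"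
  using sum_mult_delta_right[of f i] by (simp add: delta_commute)

lemma sum_delta [simp]: "(\<Sum>j\<in>UNIV. delta j (i::'a::finite)) = 1"
  using sum_mult_delta_right[of "\<lambda>_. 1" i] by simp

lemma strict_vector_coloring_imp_vector_coloring:
  "strict_vector_coloring E t \<Longrightarrow> vector_coloring E t"
  unfolding strict_vector_coloring_def vector_coloring_def
  by (elim conjE exE) (intro conjI exI, auto)

lemma chi_v_chi_sv_eqI:
  assumes "\<exists>i j. E i j" and "strict_vector_coloring E t"
    and "\<And>s. vector_coloring E s \<Longrightarrow> t \<le> s"
  shows "chi_v E = t" and "chi_sv E = t"
  using assms strict_vector_coloring_imp_vector_coloring
  unfolding chi_v_def chi_sv_def by (auto intro!: cInf_eq_minimum)

lemma inner_sgn_sgn: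
  fixes x y :: "'a::real_inner"
  shows "sgn x \<bullet> sgn y = (x \<bullet> y) / (norm x * norm y)"
  by (simp add: sgn_div_norm divide_inverse ac_simps)

lemma sum_adj_eq_card: "(\<Sum>j\<in>UNIV. adj E i j) = real (card {j::'a::finite. E i j})"
  by (simp add: adj_def sum.If_cases)

lemma sum_adj_mult_adj_eq_card:
  "(\<Sum>j\<in>UNIV. adj E i j * adj E j k) = real (card {j::'a::finite. E i j \<and> E j k})"
proof -
  have "adj E i j * adj E j k = (if E i j \<and> E j k then 1 else 0)" for j
    by (simp add: adj_def)
  then show ?thesis
    by (simp add: sum.If_cases)
qed

text \<open>The spectral form of strong regularity: with \<open>J\<close> the all-ones matrix,
  \<open>A\<^sup>2 = (\<theta> + \<tau>) A - \<theta> \<tau> I + \<mu> J\<close>, so \<open>\<theta>\<close> and \<open>\<tau>\<close> are the eigenvalues of \<open>A\<close>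
  orthogonal to the all-ones vector.\<close>

locale srg_eigen =
  fixes E :: "'a::finite \<Rightarrow> 'a \<Rightarrow> bool" and d \<theta> \<tau> \<mu> :: real
  assumes simple: "simple_graph E"
    and has_edge: "\<exists>i j. E i j"
    and row_sum: "\<And>i. (\<Sum>j\<in>UNIV. adj E i j) = d"
    and adj_square: "\<And>i k. (\<Sum>j\<in>UNIV. adj E i j * adj E j k) =
      (\<theta> + \<tau>) * adj E i k - \<theta> * \<tau> * delta i k + \<mu>"
    and eigen_less: "\<tau> < \<theta>"
    and eigen_min_nonpos: "\<tau> \<le> 0"
    and eigen_nonneg: "0 \<le> \<theta>"
begin

abbreviation A :: "'a \<Rightarrow> 'a \<Rightarrow> real" where "A \<equiv> adj E"

definition N :: real where [simp]: "N = real CARD('a)"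

lemma adj_sym: "A i j = A j i"
  using simple unfolding simple_graph_def adj_def by metis

lemma adj_diag: "A i i = 0"
  using simple unfolding simple_graph_def adj_def by simp

lemma adj_mult_self: "A i j * A i j = A i j"
  by (simp add: adj_def)

lemma col_sum: "(\<Sum>i\<in>UNIV. A i j) = d"
  using row_sum[of j] by (simp add: adj_sym)

lemma degree_pos: "0 < d"
proof -
  obtain i j where "E i j"
    using has_edge by blast
  then have "1 \<le> (\<Sum>k\<in>UNIV. A i k)"
    using member_le_sum[of j UNIV "A i"] by (simp add: adj_def)
  then show ?thesis
    using row_sum[of i] by simp
qed

lemma eigen_product: "\<theta> * \<tau> = \<mu> - d"
proof -
  have "(\<Sum>j\<in>UNIV. A i j * A j i) = d" for i
    using row_sum[of i] by (simp add: adj_sym[of _ i] adj_mult_self)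
  then show ?thesis
    using adj_square[of i i for i] by (simp add: adj_diag delta_def)
qed

text \<open>Count the walks of length 2 from a fixed vertex in two ways.\<close>

lemma card_mult_mu: "N * \<mu> = (d - \<theta>) * (d - \<tau>)"
proof -
  fix i :: 'a
  have "(\<Sum>k\<in>UNIV. \<Sum>j\<in>UNIV. A i j * A j k) = (\<Sum>j\<in>UNIV. A i j * (\<Sum>k\<in>UNIV. A j k))"
    by (subst sum.swap) (simp add: sum_distrib_left)
  also have "\<dots> = d * d"
    by (simp add: row_sum sum_distrib_right[symmetric])
  finally have "d * d = (\<Sum>k\<in>UNIV. (\<theta> + \<tau>) * A i k - \<theta> * \<tau> * delta i k + \<mu>)"
    by (simp add: adj_square)
  also have "\<dots> = (\<theta> + \<tau>) * d - \<theta> * \<tau> + N * \<mu>"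
    by (simp add: sum.distrib sum_subtractf sum_distrib_left[symmetric] row_sum delta_def)
  finally show ?thesis
    using eigen_product by (simp add: algebra_simps)
qed

lemma mu_eq: "\<mu> = (d - \<theta>) * (d - \<tau>) / N"
  using card_mult_mu by (simp add: field_simps)

lemma sum_square_adj_apply:
  fixes x :: "'a \<Rightarrow> real"
  shows "(\<Sum>i\<in>UNIV. (\<Sum>j\<in>UNIV. A i j * x j)\<^sup>2) =
    (\<theta> + \<tau>) * (\<Sum>i\<in>UNIV. \<Sum>j\<in>UNIV. A i j * x i * x j)
    - \<theta> * \<tau> * (\<Sum>i\<in>UNIV. (x i)\<^sup>2) + \<mu> * (\<Sum>i\<in>UNIV. x i)\<^sup>2"
proof -
  have "(\<Sum>i\<in>UNIV. (\<Sum>j\<in>UNIV. A i j * x j)\<^sup>2) =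
      (\<Sum>i\<in>UNIV. \<Sum>j\<in>UNIV. \<Sum>k\<in>UNIV. x j * x k * (A i j * A i k))"
    unfolding power2_eq_square sum_product by (simp add: algebra_simps)
  also have "\<dots> = (\<Sum>j\<in>UNIV. \<Sum>k\<in>UNIV. x j * x k * (\<Sum>i\<in>UNIV. A i j * A i k))"
    by (subst sum.swap, rule sum.cong[OF refl], subst sum.swap) (simp add: sum_distrib_left)
  also have "\<dots> = (\<Sum>j\<in>UNIV. \<Sum>k\<in>UNIV. x j * x k * (\<Sum>i\<in>UNIV. A j i * A i k))"
    by (simp add: adj_sym[of _ j for j])
  also have "\<dots> = (\<Sum>j\<in>UNIV. (\<theta> + \<tau>) * (\<Sum>k\<in>UNIV. A j k * x j * x k)
      - \<theta> * \<tau> * (\<Sum>k\<in>UNIV. (x j * x k) * delta j k) + \<mu> * (\<Sum>k\<in>UNIV. x j * x k))"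
    by (intro sum.cong refl)
      (simp add: adj_square sum.distrib sum_subtractf sum_distrib_left algebra_simps)
  also have "\<dots> = (\<theta> + \<tau>) * (\<Sum>i\<in>UNIV. \<Sum>j\<in>UNIV. A i j * x i * x j)
      - \<theta> * \<tau> * (\<Sum>i\<in>UNIV. (x i)\<^sup>2) + \<mu> * (\<Sum>i\<in>UNIV. x i)\<^sup>2"
    unfolding sum_mult_delta_right' power2_eq_square sum_product
    by (simp only: sum.distrib sum_subtractf sum_distrib_left)
  finally show ?thesis .
qed

text \<open>The form is controlled by the vector \<open>w = (A - \<tau> I - b J) x\<close>: the relation
  \<open>A\<^sup>2 = (\<theta> + \<tau>) A - \<theta> \<tau> I + \<mu> J\<close> turns \<open>\<parallel>w\<parallel>\<^sup>2\<close> into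
  \<open>(\<theta> - \<tau>) (x\<^sup>T A x - \<tau> \<parallel>x\<parallel>\<^sup>2)\<close> minus a multiple of \<open>(\<Sum> x)\<^sup>2\<close>,
  and that multiple is nonpositive because \<open>d \<ge> \<tau>\<close>.\<close>

lemma adj_form_ge:
  fixes x :: "'a \<Rightarrow> real"
  shows "\<tau> * (\<Sum>i\<in>UNIV. (x i)\<^sup>2) \<le> (\<Sum>i\<in>UNIV. \<Sum>j\<in>UNIV. A i j * x i * x j)"
proof -
  define y where "y i = (\<Sum>j\<in>UNIV. A i j * x j)" for i
  define S where "S = (\<Sum>i\<in>UNIV. x i)"
  define P where "P = (\<Sum>i\<in>UNIV. \<Sum>j\<in>UNIV. A i j * x i * x j)"
  define X where "X = (\<Sum>i\<in>UNIV. (x i)\<^sup>2)"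
  define b where "b = (d - \<tau>) / N"
  have y_x: "(\<Sum>i\<in>UNIV. y i * x i) = P"
    unfolding y_def P_def by (simp add: sum_distrib_left sum_distrib_right algebra_simps)
  have "(\<Sum>i\<in>UNIV. y i) = (\<Sum>j\<in>UNIV. x j * (\<Sum>i\<in>UNIV. A i j))"
    unfolding y_def by (subst sum.swap) (simp add: sum_distrib_left algebra_simps)
  then have sum_y: "(\<Sum>i\<in>UNIV. y i) = d * S"
    by (simp add: col_sum S_def sum_distrib_left algebra_simps)
  have expand: "(y i - \<tau> * x i - b * S)\<^sup>2 = (y i)\<^sup>2 + \<tau>\<^sup>2 * (x i)\<^sup>2 + b\<^sup>2 * S\<^sup>2
      - 2 * \<tau> * (y i * x i) - 2 * b * S * y i + 2 * \<tau> * b * S * x i" for i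
    by (simp add: power2_eq_square algebra_simps)
  have y_square: "(\<Sum>i\<in>UNIV. (y i)\<^sup>2) = (\<theta> + \<tau>) * P - \<theta> * \<tau> * X + \<mu> * S\<^sup>2"
    unfolding y_def P_def X_def S_def by (rule sum_square_adj_apply)
  have coeff: "\<mu> + N * b\<^sup>2 - 2 * b * (d - \<tau>) = - ((d - \<tau>) * (\<theta> - \<tau>) / N)"
    unfolding b_def mu_eq by (simp add: field_simps power2_eq_square)
  have "0 \<le> (\<Sum>i\<in>UNIV. (y i - \<tau> * x i - b * S)\<^sup>2)"
    by (simp add: sum_nonneg)
  also have "(\<Sum>i\<in>UNIV. (y i - \<tau> * x i - b * S)\<^sup>2) =
      (\<Sum>i\<in>UNIV. (y i)\<^sup>2) + \<tau>\<^sup>2 * X + N * b\<^sup>2 * S\<^sup>2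
      - 2 * \<tau> * (\<Sum>i\<in>UNIV. y i * x i) - 2 * b * S * (\<Sum>i\<in>UNIV. y i) + 2 * \<tau> * b * S * S"
    unfolding expand
    by (simp only: sum.distrib sum_subtractf sum_distrib_left[symmetric] sum_constant)
      (simp add: X_def S_def)
  also have "\<dots> = (\<theta> - \<tau>) * (P - \<tau> * X) + S\<^sup>2 * (\<mu> + N * b\<^sup>2 - 2 * b * (d - \<tau>))"
    unfolding y_x sum_y y_square by (simp add: algebra_simps power2_eq_square)
  finally have "S\<^sup>2 * ((d - \<tau>) * (\<theta> - \<tau>) / N) \<le> (\<theta> - \<tau>) * (P - \<tau> * X)"
    unfolding coeff by simp
  moreover have "0 \<le> S\<^sup>2 * ((d - \<tau>) * (\<theta> - \<tau>) / N)"
    using degree_pos eigen_min_nonpos eigen_less by simp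
  ultimately have "0 \<le> (\<theta> - \<tau>) * (P - \<tau> * X)"
    by linarith
  then show ?thesis
    using eigen_less unfolding P_def X_def by (simp add: zero_le_mult_iff)
qed

lemma adj_gram_form_ge:
  fixes u :: "'a \<Rightarrow> real^'b"
  shows "\<tau> * (\<Sum>i\<in>UNIV. (norm (u i))\<^sup>2) \<le> (\<Sum>i\<in>UNIV. \<Sum>j\<in>UNIV. A i j * (u i \<bullet> u j))"
proof -
  have "\<tau> * (\<Sum>i\<in>UNIV. (norm (u i))\<^sup>2) = (\<Sum>c\<in>UNIV. \<tau> * (\<Sum>i\<in>UNIV. (u i $ c)\<^sup>2))"
    unfolding power2_norm_eq_inner
    by (simp add: inner_vec_def power2_eq_square sum_distrib_left) (rule sum.swap)
  also have "\<dots> \<le> (\<Sum>c\<in>UNIV. \<Sum>i\<in>UNIV. \<Sum>j\<in>UNIV. A i j * (u i $ c) * (u j $ c))"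
    by (rule sum_mono) (rule adj_form_ge)
  also have "\<dots> = (\<Sum>i\<in>UNIV. \<Sum>j\<in>UNIV. A i j * (u i \<bullet> u j))"
    unfolding inner_vec_def inner_real_def
    by (subst sum.swap, rule sum.cong[OF refl], subst sum.swap) (simp add: sum_distrib_left mult.assoc)
  finally show ?thesis .
qed

lemma eigen_min_le: "\<tau> \<le> -1"
proof -
  obtain i j where ij: "E i j"
    using has_edge by blast
  then have "i \<noteq> j"
    using simple unfolding simple_graph_def by auto
  define x where "x a = delta a i - delta a j" for a
  have "(x a)\<^sup>2 = x a * delta a i - x a * delta a j" for a
    by (simp only: x_def[of a] power2_eq_square right_diff_distrib)
  then have "(\<Sum>a\<in>UNIV. (x a)\<^sup>2) = x i - x j"
    by (simp add: sum_subtractf)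
  then have norm_x: "(\<Sum>a\<in>UNIV. (x a)\<^sup>2) = 2"
    using \<open>i \<noteq> j\<close> by (simp add: x_def delta_commute[of j i])
  have row_form: "(\<Sum>b\<in>UNIV. A a b * x a * x b) = (A a i - A a j) * x a" for a
  proof -
    have "A a b * x a * x b = (A a b * x a) * delta b i - (A a b * x a) * delta b j" for b
      by (simp only: x_def[of b] right_diff_distrib)
    then show ?thesis
      by (simp only: sum_subtractf sum_mult_delta_right) (simp add: algebra_simps)
  qed
  have "(\<Sum>a\<in>UNIV. \<Sum>b\<in>UNIV. A a b * x a * x b) = (\<Sum>a\<in>UNIV. (A a i - A a j) * x a)"
    by (simp only: row_form)
  also have "\<dots> = (\<Sum>a\<in>UNIV. (A a i - A a j) * delta a i) - (\<Sum>a\<in>UNIV. (A a i - A a j) * delta a j)"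
    by (simp only: x_def right_diff_distrib sum_subtractf)
  also have "\<dots> = -2"
    using ij by (simp add: adj_diag adj_sym[of j i]) (simp add: adj_def)
  finally show ?thesis
    using adj_form_ge[of x] norm_x by simp
qed

lemma vector_coloring_ge:
  assumes "vector_coloring E s"
  shows "1 - d / \<tau> \<le> s"
proof -
  obtain u :: "'a \<Rightarrow> real^'a" where unit: "\<And>i. norm (u i) = 1"
    and edge: "\<And>i j. E i j \<Longrightarrow> u i \<bullet> u j \<le> - 1 / (s - 1)" and "2 \<le> s"
    using assms unfolding vector_coloring_def by blast
  have "\<tau> * N \<le> (\<Sum>i\<in>UNIV. \<Sum>j\<in>UNIV. A i j * (u i \<bullet> u j))"
    using adj_gram_form_ge[of u] by (simp add: unit mult.commute)
  also have "\<dots> \<le> (\<Sum>i\<in>UNIV. \<Sum>j\<in>UNIV. A i j * (- 1 / (s - 1)))"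
    by (intro sum_mono) (auto simp: adj_def dest: edge)
  also have "\<dots> = (\<Sum>i\<in>UNIV. \<Sum>j\<in>UNIV. A i j) * (- 1 / (s - 1))"
    by (simp only: sum_distrib_right)
  also have "\<dots> = (- d / (s - 1)) * N"
    by (simp add: row_sum)
  finally have "\<tau> \<le> - d / (s - 1)"
    by (rule mult_right_le_imp_le) simp
  then show ?thesis
    using \<open>2 \<le> s\<close> eigen_min_le by (simp add: field_simps)
qed

text \<open>The columns of \<open>A - \<theta> I - ((d - \<theta>) / N) J\<close> are, up to the factor \<open>\<theta> - \<tau>\<close>,
  the projections of the standard basis onto the \<open>\<tau>\<close>-eigenspace of \<open>A\<close>; normalised,
  they form the optimal strict vector colouring.\<close>

definition gram_vec :: "'a \<Rightarrow> real^'a" where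
  "gram_vec i = (\<chi> k. A k i - \<theta> * delta k i - (d - \<theta>) / N)"

lemma inner_gram_vec:
  "gram_vec i \<bullet> gram_vec j = (\<theta> - \<tau>) * (\<theta> * delta i j - A i j + (d - \<theta>) / N)"
proof -
  define c where "c = (d - \<theta>) / N"
  have "gram_vec i \<bullet> gram_vec j =
      (\<Sum>k\<in>UNIV. A i k * A k j - \<theta> * (A k i * delta k j) - c * A k i - \<theta> * (delta k i * A k j)
        + \<theta> * \<theta> * (delta k i * delta k j) + \<theta> * c * delta k i - c * A k j + c * \<theta> * delta k j + c * c)"
    unfolding gram_vec_def inner_vec_def inner_real_def c_def[symmetric]
    by (simp add: algebra_simps adj_sym[of _ i])
  also have "\<dots> = (\<theta> + \<tau>) * A i j - \<theta> * \<tau> * delta i j + \<mu> - 2 * \<theta> * A i j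
      + \<theta> * \<theta> * delta i j - 2 * c * (d - \<theta>) + N * c * c"
    by (simp only: sum.distrib sum_subtractf sum_distrib_left[symmetric] adj_square col_sum
        sum_mult_delta_right sum_mult_delta_left sum_delta sum_constant)
      (simp add: adj_sym[of j i] delta_commute[of j i] algebra_simps)
  also have "\<dots> = (\<theta> - \<tau>) * (\<theta> * delta i j - A i j + (d - \<theta>) / N)"
    unfolding mu_eq c_def by (simp add: field_simps)
  finally show ?thesis .
qed

lemma inner_gram_vec_self_pos: "0 < gram_vec i \<bullet> gram_vec i"
proof -
  have "1 \<le> N"
    by (simp add: Suc_le_eq)
  then have "0 < ((N - 1) * \<theta> + d) / N"
    using eigen_nonneg degree_pos by (intro divide_pos_pos add_nonneg_pos) auto
  moreover have "gram_vec i \<bullet> gram_vec i = (\<theta> - \<tau>) * (((N - 1) * \<theta> + d) / N)"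
    by (simp add: inner_gram_vec adj_diag delta_def field_simps)
  ultimately show ?thesis
    using eigen_less by (metis mult_pos_pos diff_gt_0_iff_gt)
qed

definition coloring_vec :: "'a \<Rightarrow> real^'a" where
  "coloring_vec i = sgn (gram_vec i)"

lemma norm_coloring_vec: "norm (coloring_vec i) = 1"
  using inner_gram_vec_self_pos[of i] by (auto simp: coloring_vec_def norm_sgn)

lemma inner_coloring_vec_edge:
  assumes "E i j"
  shows "coloring_vec i \<bullet> coloring_vec j = \<tau> / d"
proof -
  define r where "r = (d - \<theta>) / N"
  have "i \<noteq> j"
    using assms simple unfolding simple_graph_def by auto
  have self: "gram_vec k \<bullet> gram_vec k = (\<theta> - \<tau>) * (\<theta> + r)" for k
    by (simp add: inner_gram_vec adj_diag r_def)
  then have "0 < \<theta> + r"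
    using inner_gram_vec_self_pos eigen_less by (metis diff_gt_0_iff_gt zero_less_mult_pos)
  have "norm (gram_vec i) * norm (gram_vec j) = (\<theta> - \<tau>) * (\<theta> + r)"
    using inner_gram_vec_self_pos[of i]
    by (simp add: norm_eq_sqrt_inner self real_sqrt_mult[symmetric])
  then have "coloring_vec i \<bullet> coloring_vec j = (\<theta> * delta i j - A i j + r) / (\<theta> + r)"
    using eigen_less by (simp add: coloring_vec_def inner_sgn_sgn inner_gram_vec r_def)
  also have "\<dots> = (r - 1) / (\<theta> + r)"
    using assms \<open>i \<noteq> j\<close> by (simp add: adj_def)
  also have "\<dots> = \<tau> / d"
  proof -
    have "N * (d * (r - 1) - \<tau> * (\<theta> + r)) = (d - \<theta>) * (d - \<tau>) - N * (d + \<theta> * \<tau>)"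
      unfolding r_def by (simp add: field_simps)
    also have "\<dots> = 0"
      using card_mult_mu eigen_product by simp
    finally have "d * (r - 1) - \<tau> * (\<theta> + r) = 0"
      by simp
    then have "(r - 1) * d = \<tau> * (\<theta> + r)"
      by (simp add: algebra_simps)
    then show ?thesis
      using \<open>0 < \<theta> + r\<close> degree_pos by (simp add: frac_eq_eq)
  qed
  finally show ?thesis .
qed

lemma eigen_min_ge: "- d \<le> \<tau>"
proof -
  obtain i j where "E i j"
    using has_edge by blast
  have "\<bar>coloring_vec i \<bullet> coloring_vec j\<bar> \<le> 1"
    using Cauchy_Schwarz_ineq2[of "coloring_vec i" "coloring_vec j"] by (simp add: norm_coloring_vec)
  then show ?thesis
    using inner_coloring_vec_edge[OF \<open>E i j\<close>] degree_pos by (simp add: abs_le_iff field_simps)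
qed

lemma strict_vector_coloring_eigen: "strict_vector_coloring E (1 - d / \<tau>)"
proof -
  have "\<tau> < 0"
    using eigen_min_le by simp
  then have "2 \<le> 1 - d / \<tau>" and "- 1 / (1 - d / \<tau> - 1) = \<tau> / d"
    using eigen_min_ge degree_pos by (simp_all add: field_simps)
  then show ?thesis
    unfolding strict_vector_coloring_def
    using norm_coloring_vec inner_coloring_vec_edge by auto
qed

lemma chi_v_eq: "chi_v E = 1 - d / \<tau>"
  and chi_sv_eq: "chi_sv E = 1 - d / \<tau>"
  using chi_v_chi_sv_eqI[OF has_edge strict_vector_coloring_eigen vector_coloring_ge] by auto

lemma adj_complement: "adj (complement E) i j = 1 - delta i j - A i j"
  using simple unfolding adj_def delta_def complement_def simple_graph_def by auto

lemma complement_srg_eigen: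
  assumes "\<exists>i j. i \<noteq> j \<and> \<not> E i j"
  shows "srg_eigen (complement E) (N - 1 - d) (-1 - \<tau>) (-1 - \<theta>) (N - 2 * d + \<mu> + \<theta> + \<tau>)"
proof
  show "simple_graph (complement E)"
    using simple unfolding simple_graph_def complement_def by auto
  show "\<exists>i j. complement E i j"
    using assms unfolding complement_def by auto
  show "(\<Sum>j\<in>UNIV. adj (complement E) i j) = N - 1 - d" for i
    by (simp add: adj_complement sum_subtractf row_sum delta_commute[of i])
  show "(\<Sum>j\<in>UNIV. adj (complement E) i j * adj (complement E) j k) =
    (-1 - \<tau> + (-1 - \<theta>)) * adj (complement E) i k - (-1 - \<tau>) * (-1 - \<theta>) * delta i k
    + (N - 2 * d + \<mu> + \<theta> + \<tau>)" for i k
  proof -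
    have "(1 - delta i j - A i j) * (1 - delta j k - A j k) =
      1 - delta j k - A j k - delta j i + delta j i * delta j k + delta j i * A j k - A i j
      + A i j * delta j k + A i j * A j k" for j
      by (simp add: algebra_simps delta_commute[of i j])
    then have "(\<Sum>j\<in>UNIV. adj (complement E) i j * adj (complement E) j k) =
      N - 1 - d - 1 + delta k i + A i k - d + A i k + (\<Sum>j\<in>UNIV. A i j * A j k)"
      unfolding adj_complement
      by (simp only: sum.distrib sum_subtractf sum_delta sum_mult_delta_left sum_mult_delta_right
          col_sum row_sum) (simp add: delta_commute)
    also have "\<dots> = (-1 - \<tau> + (-1 - \<theta>)) * (1 - delta i k - A i k)
        - (-1 - \<tau>) * (-1 - \<theta>) * delta i k + (N - 2 * d + \<mu> + \<theta> + \<tau>)"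
      unfolding adj_square by (simp add: delta_commute[of k i] algebra_simps)
    finally show ?thesis
      unfolding adj_complement .
  qed
  show "-1 - \<theta> < -1 - \<tau>"
    using eigen_less by simp
  show "-1 - \<theta> \<le> 0"
    using eigen_nonneg by simp
  show "0 \<le> -1 - \<tau>"
    using eigen_min_le by simp
qed

lemma chi_complement:
  assumes "\<exists>i j. i \<noteq> j \<and> \<not> E i j"
  shows "chi_v (complement E) = N / chi_v E" and "chi_sv (complement E) = N / chi_sv E"
proof -
  interpret C: srg_eigen "complement E" "N - 1 - d" "-1 - \<tau>" "-1 - \<theta>" "N - 2 * d + \<mu> + \<theta> + \<tau>"
    by (rule complement_srg_eigen[OF assms])
  have "(N + \<theta> - d) * (\<tau> - d) = N * \<tau> * (1 + \<theta>)"
    using card_mult_mu eigen_product by algebra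
  then have "1 - (N - 1 - d) / (-1 - \<theta>) = N / (1 - d / \<tau>)"
    using eigen_nonneg eigen_min_le degree_pos by (simp add: field_simps)
  then show "chi_v (complement E) = N / chi_v E" and "chi_sv (complement E) = N / chi_sv E"
    using C.chi_v_eq C.chi_sv_eq chi_v_eq chi_sv_eq by simp_all
qed

end

lemma strongly_regular_mu_le_degree:
  assumes "strongly_regular E n d lam mu"
  shows "mu \<le> d"
proof -
  obtain i j where "i \<noteq> j" "\<not> E i j"
    using assms unfolding strongly_regular_def by blast
  then have "mu = card {k. E i k \<and> E j k}"
    using assms unfolding strongly_regular_def by simp
  also have "\<dots> \<le> card {k. E i k}"
    by (rule card_mono) auto
  finally show ?thesis
    using assms unfolding strongly_regular_def by simp
qed

lemma strongly_regular_lam_less_degree: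
  assumes "strongly_regular E n d lam mu"
  shows "lam < d"
proof -
  obtain i j where "E i j"
    using assms unfolding strongly_regular_def by blast
  then have "lam = card {k. E i k \<and> E j k}"
    using assms unfolding strongly_regular_def by simp
  also have "\<dots> < card {k. E i k}"
    using \<open>E i j\<close> assms by (intro psubset_card_mono) (auto simp: strongly_regular_def simple_graph_def)
  finally show ?thesis
    using assms unfolding strongly_regular_def by simp
qed

lemma strongly_regular_adj_square:
  assumes "strongly_regular E n d lam mu"
  shows "(\<Sum>j\<in>UNIV. adj E i j * adj E j k) =
    (real lam - real mu) * adj E i k + (real d - real mu) * delta i k + real mu"
proof -
  have "simple_graph E"
    using assms unfolding strongly_regular_def by blast
  then have "{j. E i j \<and> E j k} = {j. E i j \<and> E k j}"
    unfolding simple_graph_def by blast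
  then have "(\<Sum>j\<in>UNIV. adj E i j * adj E j k) = real (card {j. E i j \<and> E k j})"
    by (simp add: sum_adj_mult_adj_eq_card)
  then show ?thesis
    using assms \<open>simple_graph E\<close>
    by (cases "i = k"; cases "E i k") (auto simp: strongly_regular_def simple_graph_def adj_def)
qed

lemma strongly_regular_srg_eigen:
  assumes srg: "strongly_regular E n d lam mu"
    and t: "t = sqrt ((real mu - real lam)\<^sup>2 + 4 * (real d - real mu))"
  shows "srg_eigen E (real d) ((real lam - real mu + t) / 2) ((real lam - real mu - t) / 2) (real mu)"
proof -
  define \<theta> where "\<theta> = (real lam - real mu + t) / 2"
  define \<tau> where "\<tau> = (real lam - real mu - t) / 2"
  have "mu \<le> d" and "lam < d"
    using strongly_regular_mu_le_degree[OF srg] strongly_regular_lam_less_degree[OF srg] .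
  then have "0 < (real mu - real lam)\<^sup>2 + 4 * (real d - real mu)"
    by (cases "mu = d") (simp_all add: add_nonneg_pos)
  then have "t\<^sup>2 = (real mu - real lam)\<^sup>2 + 4 * (real d - real mu)" and "0 < t"
    unfolding t by simp_all
  moreover have "\<bar>real lam - real mu\<bar> \<le> t"
    unfolding t using \<open>mu \<le> d\<close> by (intro real_le_rsqrt) (simp add: power2_commute)
  ultimately have sum: "\<theta> + \<tau> = real lam - real mu" and prod: "\<theta> * \<tau> = real mu - real d"
    and "\<tau> < \<theta>" and "\<tau> \<le> 0" and "0 \<le> \<theta>"
    unfolding \<theta>_def \<tau>_def by (simp_all add: field_simps power2_eq_square)
  have "srg_eigen E (real d) \<theta> \<tau> (real mu)"
  proof
    show "simple_graph E" and "\<exists>i j. E i j"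
      using srg unfolding strongly_regular_def by blast+
    show "(\<Sum>j\<in>UNIV. adj E i j) = real d" for i
      using srg by (simp add: strongly_regular_def sum_adj_eq_card)
    show "(\<Sum>j\<in>UNIV. adj E i j * adj E j k) = (\<theta> + \<tau>) * adj E i k - \<theta> * \<tau> * delta i k + real mu"
      for i k
      unfolding sum prod strongly_regular_adj_square[OF srg] by (simp add: algebra_simps)
  qed fact+
  then show ?thesis
    unfolding \<theta>_def \<tau>_def .
qed

theorem mainTheorem10:
  fixes E :: "'a::finite \<Rightarrow> 'a \<Rightarrow> bool" and n d lam mu :: nat
  assumes "strongly_regular E n d lam mu"
  defines "t \<equiv> sqrt ((real mu - real lam)\<^sup>2 + 4 * (real d - real mu))"
  shows "chi_v E = 1 + 2 * real d / (t + real mu - real lam) \<and>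
         chi_sv E = 1 + 2 * real d / (t + real mu - real lam) \<and>
         chi_v (complement E) =
           real n * (t + real mu - real lam) / (2 * real d + t + real mu - real lam) \<and>
         chi_sv (complement E) =
           real n * (t + real mu - real lam) / (2 * real d + t + real mu - real lam) \<and>
         chi_v (complement E) = real n / chi_v E \<and>
         chi_sv (complement E) = real n / chi_sv E"
proof -
  define \<tau> where "\<tau> = (real lam - real mu - t) / 2"
  interpret srg_eigen E "real d" "(real lam - real mu + t) / 2" \<tau> "real mu"
    unfolding \<tau>_def by (rule strongly_regular_srg_eigen[OF assms(1) t_def[THEN meta_eq_to_obj_eq]])
  have nonedge: "\<exists>i j. i \<noteq> j \<and> \<not> E i j" and "CARD('a) = n"
    using assms(1) unfolding strongly_regular_def by blast+
  have gap: "t + real mu - real lam = - 2 * \<tau>"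
    and gap_d: "2 * real d + t + real mu - real lam = 2 * (real d - \<tau>)"
    unfolding \<tau>_def by (simp_all add: field_simps)
  have "1 - real d / \<tau> = 1 + 2 * real d / (t + real mu - real lam)"
    and "real n / (1 - real d / \<tau>) =
      real n * (t + real mu - real lam) / (2 * real d + t + real mu - real lam)"
    unfolding gap gap_d using eigen_min_le degree_pos by (simp_all add: field_simps)
  then show ?thesis
    using chi_v_eq chi_sv_eq chi_complement[OF nonedge] \<open>CARD('a) = n\<close> by simp
qed

end
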